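(* Let $f$ be a norm on $\mathbb{R}^n$ and let $\alpha\in\mathbb{R}^n$ be badly approximable, i.e. there is $D>0$ with $\max_{1\le j\le n}\min_{a_j\in\mathbb{Z}}|p\alpha_j-a_j|\ge Dp^{-1/n}$ for all $p\in\mathbb{N}$. Then there exists $h^*=h^*(f,\alpha)\in\mathbb{N}$ such that $$f(\xi_{\nu+h^*})<\tfrac12 f(\xi_\nu)\quad\text{for all }\nu\ge1,$$ where $(p_\nu,a_\nu)$ is the $\nu$-th $f$-best simultaneous approximation to $\alpha$ and $\xi_\nu=\alpha p_\nu-a_\nu$.
   Context: A norm $f$ here is a continuous function $\mathbb{R}^n\to\mathbb{R}_+$ with $f(x)=0\iff x=0$, $f(-x)=f(x)$, $f(tx)=tf(x)$ for $t\ge0$, and convex unit ball $B_f^1=\{y:f(y)\le1\}$ with $0$ in its interior. For $\alpha\in\mathbb{R}^n$, an $f$-best simultaneous approximation is an integer point $\tau=(p,a_1,\dots,a_n)\in\mathbb{Z}^{n+1}$ with $p\ge1$ such that $f(\alpha q-b)>f(\alpha p-a)$ for all $(q,b)\in\mathbb{Z}^{n+1}$ with $1\le q\le p-1$ and for all $(p,b)$ with $b\ne a$. They form a sequence $(p_\nu,a_\nu)$ with $p_1<p_2<\dots$. *)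

theory Defs
  imports "HOL-Analysis.Analysis"
begin

definition is_norm_fun :: "(real^'n \<Rightarrow> real) \<Rightarrow> bool" where
  "is_norm_fun f \<longleftrightarrow>
     continuous_on UNIV f \<and>
     (\<forall>x. f x \<ge> 0) \<and>
     (\<forall>x. f x = 0 \<longleftrightarrow> x = 0) \<and>
     (\<forall>x. f (- x) = f x) \<and>
     (\<forall>t x. t \<ge> 0 \<longrightarrow> f (t *\<^sub>R x) = t * f x) \<and>
     convex {y. f y \<le> 1} \<and>
     0 \<in> interior {y. f y \<le> 1}"

definition int_vec :: "int^'n \<Rightarrow> real^'n" where
  "int_vec a = (\<chi> i. real_of_int (a $ i))"

definition dist_int :: "real \<Rightarrow> real" where
  "dist_int x = (INF a::int. \<bar>x - real_of_int a\<bar>)"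

definition badly_approximable :: "real^'n \<Rightarrow> bool" where
  "badly_approximable \<alpha> \<longleftrightarrow>
     (\<exists>D>0. \<forall>p::nat. p \<ge> 1 \<longrightarrow>
        Max (range (\<lambda>j. dist_int (real p * \<alpha> $ j))) \<ge> D * real p powr (- 1 / real CARD('n)))"

definition best_approx :: "(real^'n \<Rightarrow> real) \<Rightarrow> real^'n \<Rightarrow> nat \<Rightarrow> int^'n \<Rightarrow> bool" where
  "best_approx f \<alpha> p a \<longleftrightarrow> p \<ge> 1 \<and>
     (\<forall>q b. 1 \<le> q \<and> q \<le> p - 1 \<longrightarrow> f (real q *\<^sub>R \<alpha> - int_vec b) > f (real p *\<^sub>R \<alpha> - int_vec a)) \<and>
     (\<forall>b. b \<noteq> a \<longrightarrow> f (real p *\<^sub>R \<alpha> - int_vec b) > f (real p *\<^sub>R \<alpha> - int_vec a))"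

end

theory Submission
  imports Defs
begin

(* For badly approximable \<alpha> the quantity p\<^sub>\<nu> f(\<xi>\<^sub>\<nu>)^n stays between two positive constants.
   The lower bound is the definition of bad approximability; the upper bound comes from Dirichlet's
   pigeonhole theorem, because a lattice point with small error is dominated by a best approximation
   of no larger denominator.
   The denominators grow exponentially: among 2^(n+1) + 1 consecutive best approximations two, say
   l < k, agree modulo 2, and half their difference is a lattice point with error below f(\<xi>\<^sub>l),
   which forces p\<^sub>k \<ge> 3 p\<^sub>l. Hence after j 2^(n+1) steps the denominator has grown by 2^j, so the
   error has shrunk by a constant times 2^(-j/n), which is below 1/2 for large j. *)

lemma is_norm_funD:
  assumes "is_norm_fun f"
  shows "0 \<le> f x" and "f x = 0 \<longleftrightarrow> x = 0" and "f (- x) = f x"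
    and "0 \<le> t \<Longrightarrow> f (t *\<^sub>R x) = t * f x"
  using assms unfolding is_norm_fun_def by auto

lemma norm_fun_triangle:
  assumes "is_norm_fun f"
  shows "f (x + y) \<le> f x + f y"
proof (cases "x = 0 \<or> y = 0")
  case True
  then show ?thesis using is_norm_funD[OF assms] by auto
next
  case False
  then have fx: "f x > 0" and fy: "f y > 0"
    using is_norm_funD(1,2)[OF assms] by (auto simp: less_le)
  define s where "s = f x + f y"
  have s: "s > 0" using fx fy by (simp add: s_def)
  have unit: "(1 / f z) *\<^sub>R z \<in> {y. f y \<le> 1}" if "f z > 0" for z
    using that is_norm_funD(4)[OF assms, of "1 / f z" z] by simp
  have "(f x / s) *\<^sub>R ((1 / f x) *\<^sub>R x) + (f y / s) *\<^sub>R ((1 / f y) *\<^sub>R y) \<in> {y. f y \<le> 1}"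
    using assms fx fy unfolding is_norm_fun_def
    by (intro convexD unit) (auto simp: s_def add_divide_distrib[symmetric])
  moreover have "(f x / s) *\<^sub>R ((1 / f x) *\<^sub>R x) + (f y / s) *\<^sub>R ((1 / f y) *\<^sub>R y)
      = (1 / s) *\<^sub>R (x + y)"
    using fx fy by (simp add: scaleR_add_right)
  ultimately have "f ((1 / s) *\<^sub>R (x + y)) \<le> 1" by simp
  moreover have "f (x + y) = s * f ((1 / s) *\<^sub>R (x + y))"
    using s is_norm_funD(4)[OF assms, of s "(1 / s) *\<^sub>R (x + y)"] by simp
  ultimately show ?thesis
    using s by (simp add: s_def mult_left_le)
qed

lemma norm_fun_equiv_norm:
  fixes f :: "real^'n \<Rightarrow> real"
  assumes "is_norm_fun f"
  obtains c C where "0 < c" and "0 < C" and "\<And>x. c * norm x \<le> f x" and "\<And>x. f x \<le> C * norm x"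
proof -
  have cont: "continuous_on (sphere (0::real^'n) 1) f"
    using assms unfolding is_norm_fun_def by (meson continuous_on_subset subset_UNIV)
  obtain x0 where x0: "x0 \<in> sphere 0 1" and min: "\<forall>y \<in> sphere 0 1. f x0 \<le> f y"
    using continuous_attains_inf[OF compact_sphere _ cont] by auto
  obtain x1 where "x1 \<in> sphere 0 1" and max: "\<forall>y \<in> sphere 0 1. f y \<le> f x1"
    using continuous_attains_sup[OF compact_sphere _ cont] by auto
  have homog: "f x = norm x * f (sgn x)" for x
    using is_norm_funD(4)[OF assms, of "norm x" "sgn x"]
    by (cases "x = 0") (simp_all add: sgn_div_norm)
  have "f x0 > 0"
    using x0 is_norm_funD(1,2)[OF assms, of x0] by (auto simp: less_le)
  moreover have "f x0 \<le> f x1"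
    using min \<open>x1 \<in> sphere 0 1\<close> by blast
  moreover have "f x0 * norm x \<le> f x \<and> f x \<le> f x1 * norm x" for x
    using min max homog[of x]
    by (cases "x = 0") (auto simp: norm_sgn mult.commute)
  ultimately show thesis
    using that[of "f x0" "f x1"] by auto
qed

lemma int_vec_eq_if_near:
  fixes x :: "real^'n"
  assumes "norm (x - int_vec b) < 1/2" and "norm (x - int_vec b') < 1/2"
  shows "b = b'"
proof (rule vec_eq_iff[THEN iffD2], rule allI)
  fix i
  have "norm (int_vec b' - int_vec b) \<le> norm (x - int_vec b) + norm (x - int_vec b')"
    using norm_triangle_ineq4[of "x - int_vec b" "x - int_vec b'"] by simp
  then have "norm (int_vec b' - int_vec b) < 1"
    using assms by linarith
  then have "\<bar>real_of_int (b' $ i) - real_of_int (b $ i)\<bar> < 1"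
    using component_le_norm_cart[of "int_vec b' - int_vec b" i] by (simp add: int_vec_def)
  then show "b $ i = b' $ i" by linarith
qed

lemma dirichlet_simultaneous:
  fixes \<alpha> :: "real^'n" and M :: nat
  assumes "1 \<le> M"
  obtains q b where "1 \<le> q" and "q \<le> M ^ CARD('n)"
    and "\<And>i. \<bar>(real q *\<^sub>R \<alpha> - int_vec b) $ i\<bar> < 1 / real M"
proof -
  define cell where "cell q = (\<lambda>i. nat \<lfloor>real M * frac (real q * \<alpha> $ i)\<rfloor>)" for q :: nat
  have "cell ` {0..M ^ CARD('n)} \<subseteq> PiE UNIV (\<lambda>_. {..<M})"
    using assms by (auto simp: cell_def PiE_def nat_less_iff floor_less_iff frac_lt_1)
  then have "card (cell ` {0..M ^ CARD('n)}) \<le> card (PiE (UNIV :: 'n set) (\<lambda>_. {..<M}))"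
    by (intro card_mono) (auto simp: finite_PiE)
  also have "\<dots> < card {0..M ^ CARD('n)}"
    by (simp add: card_PiE)
  finally have "card (cell ` {0..M ^ CARD('n)}) < card {0..M ^ CARD('n)}" .
  then obtain q1 q2 where q12: "q1 < q2" "q2 \<le> M ^ CARD('n)" "cell q1 = cell q2"
    using pigeonhole unfolding inj_on_def by (metis atLeastAtMost_iff linorder_neqE_nat)
  define b :: "int^'n" where "b = (\<chi> i. \<lfloor>real q2 * \<alpha> $ i\<rfloor> - \<lfloor>real q1 * \<alpha> $ i\<rfloor>)"
  have "\<bar>(real (q2 - q1) *\<^sub>R \<alpha> - int_vec b) $ i\<bar> < 1 / real M" for i
  proof -
    have "\<lfloor>real M * frac (real q1 * \<alpha> $ i)\<rfloor> = \<lfloor>real M * frac (real q2 * \<alpha> $ i)\<rfloor>"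
      using fun_cong[OF q12(3), of i] by (simp add: cell_def eq_nat_nat_iff frac_ge_0)
    then have "\<bar>real M * frac (real q2 * \<alpha> $ i) - real M * frac (real q1 * \<alpha> $ i)\<bar> < 1"
      by linarith
    then have "real M * \<bar>frac (real q2 * \<alpha> $ i) - frac (real q1 * \<alpha> $ i)\<bar> < 1"
      by (simp add: abs_mult flip: right_diff_distrib)
    then have "\<bar>frac (real q2 * \<alpha> $ i) - frac (real q1 * \<alpha> $ i)\<bar> < 1 / real M"
      using assms by (simp add: less_divide_eq mult.commute)
    moreover have "(real (q2 - q1) *\<^sub>R \<alpha> - int_vec b) $ i
        = frac (real q2 * \<alpha> $ i) - frac (real q1 * \<alpha> $ i)"
      using q12(1) by (simp add: int_vec_def b_def frac_def of_nat_diff left_diff_distrib)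
    ultimately show ?thesis
      by simp
  qed
  with q12 show thesis
    by (intro that[of "q2 - q1" b]) auto
qed

lemma badly_approximable_lower_bound:
  fixes \<alpha> :: "real^'n"
  assumes "badly_approximable \<alpha>"
  obtains L where "0 < L"
    and "\<And>q b. 1 \<le> q \<Longrightarrow> L \<le> real q * norm (real q *\<^sub>R \<alpha> - int_vec b) ^ CARD('n)"
proof -
  obtain D where "D > 0" and D: "\<And>q. 1 \<le> q \<Longrightarrow>
      D * real q powr (- 1 / real CARD('n)) \<le> Max (range (\<lambda>j. dist_int (real q * \<alpha> $ j)))"
    using assms unfolding badly_approximable_def by blast
  have "D ^ CARD('n) \<le> real q * norm (real q *\<^sub>R \<alpha> - int_vec b) ^ CARD('n)"
    if "1 \<le> q" for q b
  proof -
    have "Max (range (\<lambda>j. dist_int (real q * \<alpha> $ j))) \<in> range (\<lambda>j. dist_int (real q * \<alpha> $ j))"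
      by (rule Max_in) auto
    then obtain j where j: "Max (range (\<lambda>j. dist_int (real q * \<alpha> $ j))) = dist_int (real q * \<alpha> $ j)"
      by blast
    have "dist_int (real q * \<alpha> $ j) \<le> \<bar>real q * \<alpha> $ j - real_of_int (b $ j)\<bar>"
      unfolding dist_int_def by (rule cINF_lower) (auto intro: bdd_belowI[where m=0])
    also have "\<dots> \<le> norm (real q *\<^sub>R \<alpha> - int_vec b)"
      using component_le_norm_cart[of "real q *\<^sub>R \<alpha> - int_vec b" j] by (simp add: int_vec_def)
    finally have "D * real q powr (- 1 / real CARD('n)) \<le> norm (real q *\<^sub>R \<alpha> - int_vec b)"
      using D[OF that] j by linarith
    then have "(D * real q powr (- 1 / real CARD('n))) ^ CARD('n)
        \<le> norm (real q *\<^sub>R \<alpha> - int_vec b) ^ CARD('n)"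
      using \<open>D > 0\<close> by (intro power_mono) auto
    moreover have "(D * real q powr (- 1 / real CARD('n))) ^ CARD('n) = D ^ CARD('n) / real q"
      using that by (simp add: power_mult_distrib powr_power powr_neg_one)
    ultimately show ?thesis
      using that by (simp add: divide_le_eq mult.commute)
  qed
  with \<open>D > 0\<close> show thesis
    by (intro that[of "D ^ CARD('n)"]) auto
qed

(* The nearness hypothesis makes the best numerator for each denominator unique, so the least
   denominator that does at least as well as q is itself a best approximation. *)
lemma best_approx_dominates:
  fixes f :: "real^'n \<Rightarrow> real"
  assumes "1 \<le> q"
    and near: "\<And>x. f x \<le> f (real q *\<^sub>R \<alpha> - int_vec b) \<Longrightarrow> norm x < 1/2"
  obtains q' b' where "best_approx f \<alpha> q' b'" and "q' \<le> q"
    and "f (real q' *\<^sub>R \<alpha> - int_vec b') \<le> f (real q *\<^sub>R \<alpha> - int_vec b)"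
proof -
  define rival where
    "rival q' \<longleftrightarrow>
      1 \<le> q' \<and> (\<exists>b'. f (real q' *\<^sub>R \<alpha> - int_vec b') \<le> f (real q *\<^sub>R \<alpha> - int_vec b))"
    for q'
  have "rival q" using assms(1) by (auto simp: rival_def)
  then obtain q0 where "rival q0" and least: "\<And>m. m < q0 \<Longrightarrow> \<not> rival m"
    using exists_least_iff[of rival] by blast
  then obtain b0 where "1 \<le> q0"
    and b0: "f (real q0 *\<^sub>R \<alpha> - int_vec b0) \<le> f (real q *\<^sub>R \<alpha> - int_vec b)"
    by (auto simp: rival_def)
  have "q0 \<le> q"
    using least[of q] \<open>rival q\<close> by linarith
  have "f (real q0 *\<^sub>R \<alpha> - int_vec b0) < f (real q0 *\<^sub>R \<alpha> - int_vec b')" if "b' \<noteq> b0" for b'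
  proof (rule ccontr)
    assume "\<not> ?thesis"
    then have "norm (real q0 *\<^sub>R \<alpha> - int_vec b') < 1/2"
      using near b0 by simp
    moreover have "norm (real q0 *\<^sub>R \<alpha> - int_vec b0) < 1/2"
      using near b0 by simp
    ultimately show False
      using int_vec_eq_if_near that by blast
  qed
  moreover have "f (real q0 *\<^sub>R \<alpha> - int_vec b0) < f (real q' *\<^sub>R \<alpha> - int_vec b')"
    if "1 \<le> q'" and "q' \<le> q0 - 1" for q' b'
  proof -
    have "\<not> rival q'"
      using least[of q'] that \<open>1 \<le> q0\<close> by linarith
    then have "f (real q *\<^sub>R \<alpha> - int_vec b) < f (real q' *\<^sub>R \<alpha> - int_vec b')"
      using that(1) unfolding rival_def by (simp add: not_le)
    with b0 show ?thesis by linarith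
  qed
  ultimately have "best_approx f \<alpha> q0 b0"
    using \<open>1 \<le> q0\<close> unfolding best_approx_def by blast
  with \<open>q0 \<le> q\<close> b0 show thesis
    using that by blast
qed

lemma nat_power_bracket:
  fixes P N :: nat
  assumes "0 < N" and "0 < P"
  obtains m where "m ^ N < P" and "P \<le> Suc m ^ N"
proof -
  define m where "m = (LEAST m. P \<le> Suc m ^ N)"
  have "P \<le> Suc P ^ N"
    using self_le_power[of "Suc P" N] assms by simp
  then have "P \<le> Suc m ^ N"
    unfolding m_def by (rule LeastI)
  moreover have "m ^ N < P"
  proof (cases m)
    case 0
    then show ?thesis using assms by (simp add: zero_power)
  next
    case (Suc k)
    then have "\<not> P \<le> Suc k ^ N"
      using not_less_Least[of k "\<lambda>m. P \<le> Suc m ^ N"] unfolding m_def by simp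
    then show ?thesis using Suc by simp
  qed
  ultimately show thesis using that by blast
qed

lemma parity_collision:
  fixes p :: "nat \<Rightarrow> nat" and a :: "nat \<Rightarrow> int^'n"
  obtains l k where "\<nu> \<le> l" and "l < k" and "k \<le> \<nu> + 2 * 2 ^ CARD('n)"
    and "p k mod 2 = p l mod 2" and "\<And>i. a k $ i mod 2 = a l $ i mod 2"
proof -
  define parity where "parity k = (p k mod 2, \<lambda>i. a k $ i mod 2)" for k
  define K where "K = {\<nu>..\<nu> + 2 * 2 ^ CARD('n)}"
  have "parity ` K \<subseteq> {0, 1} \<times> PiE UNIV (\<lambda>_. {0, 1})"
    by (auto simp: parity_def PiE_def)
  then have "card (parity ` K) \<le> card ({0::nat, 1} \<times> PiE (UNIV :: 'n set) (\<lambda>_. {0::int, 1}))"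
    by (intro card_mono) (auto simp: finite_PiE)
  also have "\<dots> = 2 * 2 ^ CARD('n)"
    by (simp add: card_cartesian_product card_PiE flip: numeral_2_eq_2)
  finally have "card (parity ` K) < card K"
    by (simp add: K_def)
  then obtain l k where "l \<in> K" "k \<in> K" "l < k" "parity l = parity k"
    using pigeonhole unfolding inj_on_def by (metis linorder_neqE_nat)
  moreover from \<open>parity l = parity k\<close>
  have "p k mod 2 = p l mod 2" "a k $ i mod 2 = a l $ i mod 2" for i
    unfolding parity_def by (metis prod.inject)+
  ultimately show thesis
    using that[of l k] unfolding K_def by auto
qed

locale best_approx_sequence =
  fixes f :: "real^'n \<Rightarrow> real" and \<alpha> :: "real^'n"
    and p :: "nat \<Rightarrow> nat" and a :: "nat \<Rightarrow> int^'n"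
  assumes norm_fun: "is_norm_fun f"
    and increasing: "\<forall>\<nu>\<ge>1. p \<nu> < p (Suc \<nu>)"
    and enumerates: "\<forall>q b. best_approx f \<alpha> q b \<longleftrightarrow> (\<exists>\<nu>\<ge>1. q = p \<nu> \<and> b = a \<nu>)"
begin

abbreviation \<xi> :: "nat \<Rightarrow> real^'n" where
  "\<xi> \<nu> \<equiv> real (p \<nu>) *\<^sub>R \<alpha> - int_vec (a \<nu>)"

lemma best_approx_seq: "1 \<le> \<nu> \<Longrightarrow> best_approx f \<alpha> (p \<nu>) (a \<nu>)"
  using enumerates by blast

lemma p_pos: "1 \<le> \<nu> \<Longrightarrow> 1 \<le> p \<nu>"
  using best_approx_seq unfolding best_approx_def by blast

lemma p_less:
  assumes "1 \<le> l" and "l < k"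
  shows "p l < p k"
proof -
  have "p (Suc i) < p (Suc (Suc i))" for i
    using increasing by simp
  then have "p (Suc (l - 1)) < p (Suc (k - 1))"
    by (rule lift_Suc_mono_less) (use assms in linarith)
  with assms show ?thesis by simp
qed

lemma p_le:
  assumes "1 \<le> l" and "l \<le> k"
  shows "p l \<le> p k"
proof (cases "l = k")
  case False
  with assms have "p l < p k" by (intro p_less) simp_all
  then show ?thesis by simp
qed simp

lemma error_less:
  assumes "1 \<le> l" and "l < k"
  shows "f (\<xi> k) < f (\<xi> l)"
proof -
  have "\<forall>q b. 1 \<le> q \<and> q \<le> p k - 1 \<longrightarrow> f (\<xi> k) < f (real q *\<^sub>R \<alpha> - int_vec b)"
    using best_approx_seq[of k] assms unfolding best_approx_def by simp
  moreover have "1 \<le> p l \<and> p l \<le> p k - 1"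
    using p_less[OF assms] p_pos[OF assms(1)] by linarith
  ultimately show ?thesis by blast
qed

lemma error_le:
  assumes "1 \<le> l" and "l \<le> k"
  shows "f (\<xi> k) \<le> f (\<xi> l)"
proof (cases "l = k")
  case False
  with assms have "f (\<xi> k) < f (\<xi> l)" by (intro error_less) simp_all
  then show ?thesis by simp
qed simp

lemma error_less_if_near_before:
  assumes "1 \<le> \<mu>" and "1 \<le> q" and "q < p \<mu>"
    and "\<And>x. f x \<le> f (real q *\<^sub>R \<alpha> - int_vec b) \<Longrightarrow> norm x < 1/2"
  shows "f (\<xi> \<mu>) < f (real q *\<^sub>R \<alpha> - int_vec b)"
proof -
  obtain q' b' where "best_approx f \<alpha> q' b'" "q' \<le> q"
    and le: "f (real q' *\<^sub>R \<alpha> - int_vec b') \<le> f (real q *\<^sub>R \<alpha> - int_vec b)"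
    using best_approx_dominates assms(2,4) by blast
  then obtain \<nu> where "1 \<le> \<nu>" "q' = p \<nu>" "b' = a \<nu>"
    using enumerates by blast
  moreover have "\<nu> < \<mu>"
  proof (rule ccontr)
    assume "\<not> \<nu> < \<mu>"
    then have "p \<mu> \<le> p \<nu>"
      using p_le assms(1) by simp
    then show False
      using \<open>q' = p \<nu>\<close> \<open>q' \<le> q\<close> assms(3) by linarith
  qed
  ultimately show ?thesis
    using error_less[of \<nu> \<mu>] le by simp
qed

lemma p_triples_if_same_parity:
  assumes "1 \<le> l" and "l < k"
    and "p k mod 2 = p l mod 2" and "\<And>i. a k $ i mod 2 = a l $ i mod 2"
  shows "3 * p l \<le> p k"
proof -
  have "p l < p k"
    using p_less assms(1,2) by simp
  with assms(3) obtain q where q: "p k = p l + 2 * q"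
    by (metis dvd_def le_add_diff_inverse less_imp_le mod_eq_dvd_iff_nat)
  with \<open>p l < p k\<close> have "1 \<le> q" by simp
  define b :: "int^'n" where "b = (\<chi> i. (a k $ i - a l $ i) div 2)"
  have "2 dvd (a k $ i - a l $ i)" for i
    using assms(4) by (simp add: mod_eq_dvd_iff)
  then have mid: "real q *\<^sub>R \<alpha> - int_vec b = (1/2) *\<^sub>R (\<xi> k + - \<xi> l)"
    by (simp add: vec_eq_iff int_vec_def b_def q real_of_int_div field_simps)
  have "f (real q *\<^sub>R \<alpha> - int_vec b) = 1/2 * f (\<xi> k + - \<xi> l)"
    unfolding mid by (rule is_norm_funD(4)[OF norm_fun]) simp
  also have "\<dots> \<le> 1/2 * (f (\<xi> k) + f (\<xi> l))"
    using norm_fun_triangle[OF norm_fun, of "\<xi> k" "- \<xi> l"]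
    unfolding is_norm_funD(3)[OF norm_fun] by simp
  also have "\<dots> < f (\<xi> l)"
    using error_less[OF assms(1,2)] by simp
  finally have "f (real q *\<^sub>R \<alpha> - int_vec b) < f (\<xi> l)" .
  moreover have "\<forall>q b. 1 \<le> q \<and> q \<le> p l - 1 \<longrightarrow> f (\<xi> l) < f (real q *\<^sub>R \<alpha> - int_vec b)"
    using best_approx_seq[OF assms(1)] unfolding best_approx_def by blast
  ultimately have "\<not> q \<le> p l - 1"
    using \<open>1 \<le> q\<close> by (meson less_asym)
  with q show ?thesis by linarith
qed

lemma p_doubles:
  assumes "1 \<le> \<nu>"
  shows "2 * p \<nu> \<le> p (\<nu> + 2 * 2 ^ CARD('n))"
proof -
  obtain l k where "\<nu> \<le> l" "l < k" "k \<le> \<nu> + 2 * 2 ^ CARD('n)"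
    and "p k mod 2 = p l mod 2" "\<And>i. a k $ i mod 2 = a l $ i mod 2"
    using parity_collision by blast
  with assms have "3 * p l \<le> p k" and "p \<nu> \<le> p l" and "p k \<le> p (\<nu> + 2 * 2 ^ CARD('n))"
    by (auto intro: p_triples_if_same_parity p_le)
  then show ?thesis by linarith
qed

lemma p_grows_exponentially:
  assumes "1 \<le> \<nu>"
  shows "2 ^ j * p \<nu> \<le> p (\<nu> + j * (2 * 2 ^ CARD('n)))"
proof (induction j)
  case (Suc j)
  have "2 ^ Suc j * p \<nu> \<le> 2 * p (\<nu> + j * (2 * 2 ^ CARD('n)))"
    using Suc.IH by simp
  also have "\<dots> \<le> p (\<nu> + j * (2 * 2 ^ CARD('n)) + 2 * 2 ^ CARD('n))"
    using assms by (intro p_doubles) simp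
  finally show ?case
    by (simp add: algebra_simps)
qed simp

lemma error_lower_bound:
  assumes "badly_approximable \<alpha>"
  obtains L where "0 < L" and "\<And>\<nu>. 1 \<le> \<nu> \<Longrightarrow> L \<le> real (p \<nu>) * f (\<xi> \<nu>) ^ CARD('n)"
proof -
  obtain c where "0 < c" and lower: "\<And>x. c * norm x \<le> f x"
    using norm_fun_equiv_norm[OF norm_fun] by metis
  obtain L where "0 < L"
    and L: "\<And>q b. 1 \<le> q \<Longrightarrow> L \<le> real q * norm (real q *\<^sub>R \<alpha> - int_vec b) ^ CARD('n)"
    using badly_approximable_lower_bound[OF assms] by blast
  have "c ^ CARD('n) * L \<le> real (p \<nu>) * f (\<xi> \<nu>) ^ CARD('n)" if "1 \<le> \<nu>" for \<nu>
  proof -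
    have "c ^ CARD('n) * L \<le> c ^ CARD('n) * (real (p \<nu>) * norm (\<xi> \<nu>) ^ CARD('n))"
      using L[OF p_pos[OF that]] \<open>0 < c\<close> by simp
    also have "\<dots> = real (p \<nu>) * (c * norm (\<xi> \<nu>)) ^ CARD('n)"
      by (simp add: power_mult_distrib)
    also have "\<dots> \<le> real (p \<nu>) * f (\<xi> \<nu>) ^ CARD('n)"
      using lower \<open>0 < c\<close> by (intro mult_left_mono power_mono) auto
    finally show ?thesis .
  qed
  with \<open>0 < c\<close> \<open>0 < L\<close> show thesis
    by (intro that[of "c ^ CARD('n) * L"]) auto
qed

lemma error_less_by_dirichlet:
  assumes "0 < c" and "0 < C"
    and lower: "\<And>x. c * norm x \<le> f x" and upper: "\<And>x. f x \<le> C * norm x"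
    and "1 \<le> \<nu>" and "m ^ CARD('n) < p \<nu>" and "2 * C * CARD('n) < c * m"
  shows "f (\<xi> \<nu>) < C * CARD('n) / m"
proof -
  have "0 < 2 * C * CARD('n)"
    using \<open>0 < C\<close> by simp
  then have "0 < c * real m"
    using assms(7) by linarith
  then have "0 < m"
    using \<open>0 < c\<close> by (simp add: zero_less_mult_iff)
  then obtain q b where "1 \<le> q" and "q \<le> m ^ CARD('n)"
    and comp: "\<And>i. \<bar>(real q *\<^sub>R \<alpha> - int_vec b) $ i\<bar> < 1 / real m"
    using dirichlet_simultaneous[of m \<alpha>] by auto
  have "(\<Sum>i\<in>UNIV. \<bar>(real q *\<^sub>R \<alpha> - int_vec b) $ i\<bar>) < (\<Sum>i\<in>(UNIV :: 'n set). 1 / real m)"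
    by (rule sum_strict_mono) (simp, simp, rule comp)
  then have "norm (real q *\<^sub>R \<alpha> - int_vec b) < CARD('n) / m"
    using norm_le_l1_cart[of "real q *\<^sub>R \<alpha> - int_vec b"] by simp
  then have "C * norm (real q *\<^sub>R \<alpha> - int_vec b) < C * (CARD('n) / m)"
    using \<open>0 < C\<close> by (rule mult_strict_left_mono)
  then have small: "f (real q *\<^sub>R \<alpha> - int_vec b) < C * CARD('n) / m"
    using upper[of "real q *\<^sub>R \<alpha> - int_vec b"] by simp
  have "f (\<xi> \<nu>) < f (real q *\<^sub>R \<alpha> - int_vec b)"
  proof (rule error_less_if_near_before)
    show "1 \<le> \<nu>" "1 \<le> q" "q < p \<nu>"
      using assms(5,6) \<open>1 \<le> q\<close> \<open>q \<le> m ^ CARD('n)\<close> by simp_all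
    fix x assume "f x \<le> f (real q *\<^sub>R \<alpha> - int_vec b)"
    moreover have "C * CARD('n) / m < c / 2"
      using assms(7) \<open>0 < m\<close> by (simp add: field_simps)
    ultimately have "c * norm x < c * (1/2)"
      using lower[of x] small by linarith
    then show "norm x < 1/2"
      using \<open>0 < c\<close> by simp
  qed
  with small show ?thesis by simp
qed

lemma error_upper_bound:
  obtains U where "\<And>\<nu>. 1 \<le> \<nu> \<Longrightarrow> real (p \<nu>) * f (\<xi> \<nu>) ^ CARD('n) \<le> U"
proof -
  obtain c C where "0 < c" "0 < C"
    and lower: "\<And>x. c * norm x \<le> f x" and upper: "\<And>x. f x \<le> C * norm x"
    using norm_fun_equiv_norm[OF norm_fun] by blast
  define m0 :: nat where "m0 = nat \<lceil>2 * C * CARD('n) / c\<rceil> + 1"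
  have "2 * C * CARD('n) / c < m0"
    using real_nat_ceiling_ge[of "2 * C * CARD('n) / c"] unfolding m0_def by simp
  then have m0: "2 * C * CARD('n) < c * m0"
    using \<open>0 < c\<close> by (simp add: field_simps)
  have "real (p \<nu>) * f (\<xi> \<nu>) ^ CARD('n)
      \<le> max ((2 * C * CARD('n)) ^ CARD('n)) (m0 ^ CARD('n) * f (\<xi> 1) ^ CARD('n))"
    if \<nu>: "1 \<le> \<nu>" for \<nu>
  proof -
    obtain m where m: "m ^ CARD('n) < p \<nu>" "p \<nu> \<le> Suc m ^ CARD('n)"
      using nat_power_bracket[of "CARD('n)" "p \<nu>"] p_pos[OF \<nu>] by auto
    have f_nonneg: "0 \<le> f x" for x
      using is_norm_funD(1)[OF norm_fun] .
    show ?thesis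
    proof (cases "m < m0")
      case True
      then have "Suc m ^ CARD('n) \<le> m0 ^ CARD('n)"
        by (intro power_mono) simp_all
      then have "p \<nu> \<le> m0 ^ CARD('n)"
        using m(2) by linarith
      then have "real (p \<nu>) \<le> m0 ^ CARD('n)"
        by (metis of_nat_le_iff of_nat_power)
      moreover have "f (\<xi> \<nu>) ^ CARD('n) \<le> f (\<xi> 1) ^ CARD('n)"
        using error_le[of 1 \<nu>] \<nu> f_nonneg by (intro power_mono) auto
      ultimately have "real (p \<nu>) * f (\<xi> \<nu>) ^ CARD('n) \<le> m0 ^ CARD('n) * f (\<xi> 1) ^ CARD('n)"
        using f_nonneg by (intro mult_mono) auto
      then show ?thesis by simp
    next
      case False
      then have "2 * C * CARD('n) < c * m" and "1 \<le> m"
        using m0 \<open>0 < c\<close> unfolding m0_def by (auto intro: order.strict_trans2 mult_left_mono)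
      then have "f (\<xi> \<nu>) < C * CARD('n) / m"
        using error_less_by_dirichlet[OF \<open>0 < c\<close> \<open>0 < C\<close> lower upper \<nu> m(1)] by simp
      moreover have "real (p \<nu>) \<le> real (Suc m) ^ CARD('n)"
        using m(2) by (metis of_nat_le_iff of_nat_power)
      ultimately have "real (p \<nu>) * f (\<xi> \<nu>) ^ CARD('n)
          \<le> real (Suc m) ^ CARD('n) * (C * CARD('n) / m) ^ CARD('n)"
        using f_nonneg by (intro mult_mono power_mono) auto
      also have "\<dots> = (real (Suc m) * (C * CARD('n) / m)) ^ CARD('n)"
        by (simp only: power_mult_distrib)
      also have "\<dots> \<le> (2 * real m * (C * CARD('n) / m)) ^ CARD('n)"
        using \<open>1 \<le> m\<close> \<open>0 < C\<close> by (intro power_mono mult_right_mono) auto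
      also have "\<dots> = (2 * C * CARD('n)) ^ CARD('n)"
        using \<open>1 \<le> m\<close> by (simp add: mult.assoc)
      finally show ?thesis by simp
    qed
  qed
  then show thesis using that by blast
qed

end

theorem corollary2:
  fixes f :: "real^'n \<Rightarrow> real" and \<alpha> :: "real^'n"
    and p :: "nat \<Rightarrow> nat" and a :: "nat \<Rightarrow> int^'n"
  assumes "is_norm_fun f"
    and "badly_approximable \<alpha>"
    and "\<forall>\<nu>\<ge>1. p \<nu> < p (Suc \<nu>)"
    and "\<forall>q b. best_approx f \<alpha> q b \<longleftrightarrow> (\<exists>\<nu>\<ge>1. q = p \<nu> \<and> b = a \<nu>)"
  shows "\<exists>h::nat. \<forall>\<nu>\<ge>1.
           f (real (p (\<nu> + h)) *\<^sub>R \<alpha> - int_vec (a (\<nu> + h)))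
             < 1/2 * f (real (p \<nu>) *\<^sub>R \<alpha> - int_vec (a \<nu>))"
proof -
  interpret best_approx_sequence f \<alpha> p a
    using assms(1,3,4) by unfold_locales
  obtain L where "0 < L" and lower: "\<And>\<nu>. 1 \<le> \<nu> \<Longrightarrow> L \<le> real (p \<nu>) * f (\<xi> \<nu>) ^ CARD('n)"
    using error_lower_bound[OF assms(2)] by blast
  obtain U where upper: "\<And>\<nu>. 1 \<le> \<nu> \<Longrightarrow> real (p \<nu>) * f (\<xi> \<nu>) ^ CARD('n) \<le> U"
    using error_upper_bound by blast
  obtain j :: nat where j: "2 ^ CARD('n) * U / L < 2 ^ j"
    using real_arch_pow[of 2] by auto
  define h where "h = j * (2 * 2 ^ CARD('n))"
  have "f (\<xi> (\<nu> + h)) < 1/2 * f (\<xi> \<nu>)" if "1 \<le> \<nu>" for \<nu>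
  proof (rule ccontr)
    assume "\<not> ?thesis"
    then have pow: "(f (\<xi> \<nu>) / 2) ^ CARD('n) \<le> f (\<xi> (\<nu> + h)) ^ CARD('n)"
      using is_norm_funD(1)[OF assms(1)] by (intro power_mono) auto
    have "2 ^ j * L \<le> 2 ^ CARD('n) * (real (2 ^ j * p \<nu>) * (f (\<xi> \<nu>) / 2) ^ CARD('n))"
      using lower[OF that] by (simp add: power_divide mult_left_mono)
    also have "\<dots> \<le> 2 ^ CARD('n) * (real (p (\<nu> + h)) * f (\<xi> (\<nu> + h)) ^ CARD('n))"
      using p_grows_exponentially[OF that, of j] pow is_norm_funD(1)[OF assms(1)] unfolding h_def
      by (intro mult_left_mono mult_mono) (simp_all only: of_nat_le_iff, simp_all)
    also have "\<dots> \<le> 2 ^ CARD('n) * U"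
      using upper[of "\<nu> + h"] that by simp
    finally show False
      using j \<open>0 < L\<close> by (simp add: field_simps)
  qed
  then show ?thesis by blast
qed

end
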